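(* Let $(X,\Sigma,\mu)$ be a measure space, $n\ge1$, $\mathbb{F}\in\{\mathbb{R},\mathbb{C}\}$, and $T:L^2(X,\mu;\mathbb{F}^n)\to\mathbb{F}$ a non-zero linear form. Suppose $\dim L^2(X,\mu;\mathbb{F})\ge n$. Then for every $d\in\mathbb{F}\setminus\{0\}$, the set $\mathcal{F}^{\mathbb{F}}_{(X,\mu),n}\cap T^{-1}(\{d\})$ is dense in $T^{-1}(\{d\})$ (for the norm of $L^2(X,\mu;\mathbb{F}^n)$).
   Context: A family $\Phi=(\varphi_x)_{x\in X}$ in $\mathbb{F}^n$ (with measurable coordinates) is a continuous frame indexed by $(X,\mu)$ if there are $0<A\le B$ with $A\|v\|^2\le\int_X|\langle v,\varphi_x\rangle|^2d\mu(x)\le B\|v\|^2$ for all $v\in\mathbb{F}^n$. $\mathcal{F}^{\mathbb{F}}_{(X,\mu),n}$ denotes the set of such frames, viewed as a subset of $L^2(X,\mu;\mathbb{F}^n)$ (equivalently, the elements of $L^2(X,\mu;\mathbb{F}^n)$ whose coordinate functions are linearly independent in $L^2(X,\mu;\mathbb{F})$). *)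

theory Defs
  imports "HOL-Analysis.Analysis"
begin

text \<open>Elements of L^2 are handled through representatives; everything that lives on
  L^2 (linear forms) is required to respect equality mu-almost everywhere.\<close>
definition L2 :: "'a measure \<Rightarrow> ('a \<Rightarrow> 'v::real_normed_vector) set" where
  "L2 M = {f. f \<in> borel_measurable M \<and> integrable M (\<lambda>x. (norm (f x))^2)}"

definition L2norm :: "'a measure \<Rightarrow> ('a \<Rightarrow> 'v::real_normed_vector) \<Rightarrow> real" where
  "L2norm M f = sqrt (\<integral>x. (norm (f x))^2 \<partial>M)"

text \<open>Standard inner product on F^n, w.r.t. a conjugation cj (identity for R, cnj for C).\<close>
definition inner_cj :: "('F::real_normed_field \<Rightarrow> 'F) \<Rightarrow> 'F^'n::finite \<Rightarrow> 'F^'n \<Rightarrow> 'F" where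
  "inner_cj cj v w = (\<Sum>i\<in>UNIV. v$i * cj (w$i))"

definition linear_form_L2 :: "'a measure \<Rightarrow> (('a \<Rightarrow> 'F::real_normed_field^'n::finite) \<Rightarrow> 'F) \<Rightarrow> bool" where
  "linear_form_L2 M T \<longleftrightarrow>
     (\<forall>f\<in>L2 M. \<forall>g\<in>L2 M. T (\<lambda>x. f x + g x) = T f + T g) \<and>
     (\<forall>c. \<forall>f\<in>L2 M. T (\<lambda>x. c *s f x) = c * T f) \<and>
     (\<forall>f\<in>L2 M. \<forall>g\<in>L2 M. (AE x in M. f x = g x) \<longrightarrow> T f = T g)"

text \<open>dim L^2(X,mu;F) >= n: there are n elements of L^2 that are linearly
  independent (as classes modulo a.e. equality).\<close>
definition L2_dim_ge :: "'a measure \<Rightarrow> 'F::real_normed_field itself \<Rightarrow> nat \<Rightarrow> bool" where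
  "L2_dim_ge M _ n \<longleftrightarrow>
     (\<exists>g :: nat \<Rightarrow> 'a \<Rightarrow> 'F. (\<forall>i<n. g i \<in> L2 M) \<and>
        (\<forall>c. (AE x in M. (\<Sum>i<n. c i * g i x) = 0) \<longrightarrow> (\<forall>i<n. c i = 0)))"

definition cframe :: "('F::real_normed_field \<Rightarrow> 'F) \<Rightarrow> 'a measure \<Rightarrow> ('a \<Rightarrow> 'F^'n::finite) \<Rightarrow> bool" where
  "cframe cj M \<Phi> \<longleftrightarrow> \<Phi> \<in> borel_measurable M \<and>
     (\<exists>A B. 0 < A \<and> A \<le> B \<and>
       (\<forall>v. ennreal (A * (norm v)^2) \<le> (\<integral>\<^sup>+ x. ennreal ((norm (inner_cj cj v (\<Phi> x)))^2) \<partial>M) \<and>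
            (\<integral>\<^sup>+ x. ennreal ((norm (inner_cj cj v (\<Phi> x)))^2) \<partial>M) \<le> ennreal (B * (norm v)^2)))"

end

theory Submission
  imports Defs
begin

text \<open>Pick G in L2 whose n coordinates are linearly independent, which the dimension
  hypothesis provides, and perturb f along it. If f + t G has dependent coordinates, a nonzero
  vector u_t annihilates them; for distinct such t these vectors are linearly independent in
  F^n (the usual argument for eigenvectors of distinct eigenvalues, using that G has
  independent coordinates), so there are at most n bad values of t. For every other small t,
  the rescaling of f + t G back to the level set T = d is close to f and has independent
  coordinates. Independent coordinates already make a frame: the form
  v \<mapsto> \<integral> |\<langle>v, \<Phi>(x)\<rangle>|^2 is continuous and positive on the unit sphere of F^n,
  so it is bounded below there by compactness.\<close>

lemma borel_measurable_vec_iff: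
  fixes f :: "'a \<Rightarrow> 'F::euclidean_space^'n::finite"
  shows "f \<in> borel_measurable M \<longleftrightarrow> (\<forall>i. (\<lambda>x. f x $ i) \<in> borel_measurable M)"
proof
  assume f: "f \<in> borel_measurable M"
  have "continuous_on UNIV (\<lambda>v::'F^'n. v $ i)" for i
    by (simp add: linear_continuous_on bounded_linear_vec_nth)
  then show "\<forall>i. (\<lambda>x. f x $ i) \<in> borel_measurable M"
    using measurable_compose[OF f borel_measurable_continuous_onI] by blast
next
  assume "\<forall>i. (\<lambda>x. f x $ i) \<in> borel_measurable M"
  then show "f \<in> borel_measurable M"
    unfolding borel_measurable_euclidean_space[of f]
    by (auto simp: Basis_vec_def inner_axis intro!: borel_measurable_inner)
qed

lemma borel_measurable_vec_nth [measurable (raw)]: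
  fixes f :: "'a \<Rightarrow> 'F::euclidean_space^'n::finite"
  shows "f \<in> borel_measurable M \<Longrightarrow> (\<lambda>x. f x $ i) \<in> borel_measurable M"
  using borel_measurable_vec_iff by blast

lemma norm_vector_scalar_mult:
  "norm ((c::'F::real_normed_field) *s (v::'F^'n::finite)) = norm c * norm v"
  unfolding norm_vec_def
  by (simp add: L2_set_right_distrib[symmetric] norm_mult vector_scalar_mult_def)

lemma power2_norm_add_le:
  fixes a b :: "'v::real_normed_vector"
  shows "(norm (a + b))\<^sup>2 \<le> 2 * (norm a)\<^sup>2 + 2 * (norm b)\<^sup>2"
proof -
  have "(norm (a + b))\<^sup>2 \<le> (norm a + norm b)\<^sup>2"
    by (simp add: norm_triangle_ineq power_mono)
  also have "\<dots> \<le> 2 * (norm a)\<^sup>2 + 2 * (norm b)\<^sup>2"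
    using zero_le_power2[of "norm a - norm b"] by (simp add: power2_diff power2_sum)
  finally show ?thesis .
qed

lemma L2_measurable: "f \<in> L2 M \<Longrightarrow> f \<in> borel_measurable M"
  by (simp add: L2_def)

lemma L2_integrable: "f \<in> L2 M \<Longrightarrow> integrable M (\<lambda>x. (norm (f x))\<^sup>2)"
  by (simp add: L2_def)

lemma L2_add:
  fixes f g :: "'a \<Rightarrow> 'v::euclidean_space"
  assumes "f \<in> L2 M" "g \<in> L2 M"
  shows "(\<lambda>x. f x + g x) \<in> L2 M"
proof -
  have bound: "integrable M (\<lambda>x. 2 * (norm (f x))\<^sup>2 + 2 * (norm (g x))\<^sup>2)"
    using assms by (auto simp: L2_def)
  show ?thesis
    using assms unfolding L2_def
    by (auto intro!: Bochner_Integration.integrable_bound[OF bound] simp: power2_norm_add_le)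
qed

lemma L2_scalar_mult:
  fixes f :: "'a \<Rightarrow> 'F::{real_normed_field,euclidean_space}^'n::finite"
  assumes "f \<in> L2 M"
  shows "(\<lambda>x. c *s f x) \<in> L2 M"
proof -
  have "(\<lambda>x. c *s f x) \<in> borel_measurable M"
    unfolding borel_measurable_vec_iff vector_smult_component
    using L2_measurable[OF assms] by (intro allI) measurable
  moreover have "integrable M (\<lambda>x. (norm c)\<^sup>2 * (norm (f x))\<^sup>2)"
    using assms by (auto simp: L2_def)
  ultimately show ?thesis
    by (simp add: L2_def norm_vector_scalar_mult power_mult_distrib)
qed

lemma L2_vec_lambda:
  fixes g :: "'n::finite \<Rightarrow> 'a \<Rightarrow> 'F::{real_normed_field,euclidean_space}"
  assumes "\<And>i. g i \<in> L2 M"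
  shows "(\<lambda>x. \<chi> i. g i x) \<in> L2 M"
proof -
  have "(\<lambda>x. \<chi> i. g i x) \<in> borel_measurable M"
    using assms unfolding borel_measurable_vec_iff by (simp add: L2_def)
  moreover have "integrable M (\<lambda>x. \<Sum>i\<in>UNIV. (norm (g i x))\<^sup>2)"
    using assms by (auto simp: L2_def)
  moreover have "(norm (\<chi> i. g i x))\<^sup>2 = (\<Sum>i\<in>UNIV. (norm (g i x))\<^sup>2)" for x
    by (simp add: norm_vec_def L2_set_def sum_nonneg)
  ultimately show ?thesis
    by (simp add: L2_def)
qed

lemma linear_form_L2_lincomb:
  fixes f g :: "'a \<Rightarrow> 'F::{real_normed_field,euclidean_space}^'n::finite"
  assumes T: "linear_form_L2 M T" and f: "f \<in> L2 M" and g: "g \<in> L2 M"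
  shows "T (\<lambda>x. c *s (f x + t *s g x)) = c * (T f + t * T g)"
proof -
  have add: "\<And>f g. f \<in> L2 M \<Longrightarrow> g \<in> L2 M \<Longrightarrow> T (\<lambda>x. f x + g x) = T f + T g"
    and scale: "\<And>c f. f \<in> L2 M \<Longrightarrow> T (\<lambda>x. c *s f x) = c * T f"
    using T unfolding linear_form_L2_def by blast+
  have tg: "(\<lambda>x. t *s g x) \<in> L2 M"
    using g by (rule L2_scalar_mult)
  have "T (\<lambda>x. c *s (f x + t *s g x)) = c * T (\<lambda>x. f x + t *s g x)"
    using scale[OF L2_add[OF f tg]] .
  also have "\<dots> = c * (T f + t * T g)"
    using add[OF f tg] scale[OF g] by simp
  finally show ?thesis .
qed

definition independent_coordinates :: "'a measure \<Rightarrow> ('a \<Rightarrow> 'F::field^'n::finite) \<Rightarrow> bool" where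
  "independent_coordinates M \<Phi> \<longleftrightarrow>
     (\<forall>u. (AE x in M. (\<Sum>i\<in>UNIV. u $ i * \<Phi> x $ i) = 0) \<longrightarrow> u = 0)"

lemma L2_dim_ge_obtains_independent_coordinates:
  fixes M :: "'a measure"
  assumes "L2_dim_ge M TYPE('F) CARD('n)"
  obtains G :: "'a \<Rightarrow> 'F::{real_normed_field,euclidean_space}^'n::finite" where "G \<in> L2 M" "independent_coordinates M G"
proof -
  obtain g :: "nat \<Rightarrow> 'a \<Rightarrow> 'F" where gL2: "\<forall>k<CARD('n). g k \<in> L2 M"
    and g_indep: "\<forall>c. (AE x in M. (\<Sum>k<CARD('n). c k * g k x) = 0) \<longrightarrow> (\<forall>k<CARD('n). c k = 0)"
    using assms unfolding L2_dim_ge_def by blast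
  obtain h :: "'n \<Rightarrow> nat" where h: "bij_betw h UNIV {..<CARD('n)}"
    using ex_bij_betw_finite_nat[of "UNIV :: 'n set"] by (auto simp: atLeast0LessThan)
  have h_less: "h i < CARD('n)" for i
    using h by (auto simp: bij_betw_def)
  define G where "G x = (\<chi> i. g (h i) x)" for x
  have "G \<in> L2 M"
    unfolding G_def using gL2 h_less by (intro L2_vec_lambda) blast
  moreover have "independent_coordinates M G"
    unfolding independent_coordinates_def
  proof (intro allI impI)
    fix u :: "'F^'n"
    assume u: "AE x in M. (\<Sum>i\<in>UNIV. u $ i * G x $ i) = 0"
    define c where "c k = u $ inv_into UNIV h k" for k
    have "(\<Sum>k<CARD('n). c k * g k x) = (\<Sum>i\<in>UNIV. u $ i * G x $ i)" for x
      using sum.reindex_bij_betw[OF h, of "\<lambda>k. c k * g k x"] h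
      by (simp add: c_def G_def bij_betw_def)
    then have "\<forall>k<CARD('n). c k = 0"
      using g_indep u by simp
    then show "u = 0"
      using h_less h by (metis bij_betw_imp_inj_on c_def inv_f_f vec_eq_iff zero_index)
  qed
  ultimately show ?thesis
    using that by blast
qed

lemma card_le_CARD_if_independent_family:
  fixes u :: "'s \<Rightarrow> 'F::field^'n::finite"
  assumes S: "finite S"
    and indep: "\<And>c. (\<Sum>s\<in>S. c s *s u s) = 0 \<Longrightarrow> \<forall>s\<in>S. c s = 0"
  shows "card S \<le> CARD('n)"
proof -
  have inj: "inj_on u S"
  proof (rule inj_onI, rule ccontr)
    fix s t
    assume st: "s \<in> S" "t \<in> S" "u s = u t" "s \<noteq> t"
    define c where "c r = (if r = s then 1 else if r = t then -1 else 0 :: 'F)" for r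
    have "(\<Sum>r\<in>S. c r *s u r) = (\<Sum>r\<in>{s, t}. c r *s u r)"
      using S st by (intro sum.mono_neutral_right) (auto simp: c_def)
    also have "\<dots> = 0"
      using st by (simp add: c_def)
    finally have "c s = 0"
      using indep st(1) by blast
    then show False
      by (simp add: c_def)
  qed
  have "vec.independent (u ` S)"
  proof (rule vec.independent_if_scalars_zero)
    show "finite (u ` S)"
      using S by simp
    fix c v
    assume "(\<Sum>w\<in>u ` S. c w *s w) = 0" "v \<in> u ` S"
    then show "c v = 0"
      using indep[of "c \<circ> u"] by (auto simp: sum.reindex[OF inj])
  qed
  then have "card (u ` S) \<le> vec.dim (u ` S)"
    using vec.independent_bound_general by blast
  also have "\<dots> \<le> CARD('n)"
    by (rule dim_subset_UNIV_cart_gen)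
  finally show ?thesis
    using card_image[OF inj] by simp
qed

lemma sum_pairing_lincomb:
  fixes u :: "'s \<Rightarrow> 'F::field^'n::finite"
  shows "(\<Sum>i\<in>UNIV. (\<Sum>s\<in>S. c s *s u s) $ i * h i) = (\<Sum>s\<in>S. c s * (\<Sum>i\<in>UNIV. u s $ i * h i))"
proof -
  have "(\<Sum>i\<in>UNIV. (\<Sum>s\<in>S. c s *s u s) $ i * h i) = (\<Sum>i\<in>UNIV. \<Sum>s\<in>S. c s * (u s $ i * h i))"
    by (simp add: sum_distrib_right mult.assoc)
  also have "\<dots> = (\<Sum>s\<in>S. c s * (\<Sum>i\<in>UNIV. u s $ i * h i))"
    by (subst sum.swap) (simp add: sum_distrib_left)
  finally show ?thesis .
qed

lemma perturbation_dependences_independent: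
  fixes f G :: "'a \<Rightarrow> 'F::field^'n::finite" and u :: "'F \<Rightarrow> 'F^'n"
  assumes G: "independent_coordinates M G" and S: "finite S"
    and u: "\<And>t. t \<in> S \<Longrightarrow>
      u t \<noteq> 0 \<and> (AE x in M. (\<Sum>i\<in>UNIV. u t $ i * (f x $ i + t * G x $ i)) = 0)"
  shows "(\<Sum>t\<in>S. c t *s u t) = 0 \<Longrightarrow> \<forall>t\<in>S. c t = 0"
  using S u
proof (induction S arbitrary: c rule: finite_induct)
  case empty
  then show ?case by simp
next
  case (insert a S c)
  define P where "P w x = (\<Sum>i\<in>UNIV. w $ i * f x $ i)" for w x
  define Q where "Q w x = (\<Sum>i\<in>UNIV. w $ i * G x $ i)" for w x
  have split: "(\<Sum>i\<in>UNIV. w $ i * (f x $ i + t * G x $ i)) = P w x + t * Q w x" for w x t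
    by (simp add: P_def Q_def distrib_left sum.distrib sum_distrib_left mult.left_commute)
  have P_lincomb: "P (\<Sum>t\<in>T. c t *s u t) x = (\<Sum>t\<in>T. c t * P (u t) x)"
    and Q_lincomb: "Q (\<Sum>t\<in>T. c t *s u t) x = (\<Sum>t\<in>T. c t * Q (u t) x)" for T c x
    unfolding P_def Q_def by (rule sum_pairing_lincomb)+
  have "AE x in M. \<forall>t\<in>insert a S. P (u t) x = - (t * Q (u t) x)"
    using insert.hyps(1) insert.prems(2)
    by (subst AE_finite_all) (auto simp: split eq_neg_iff_add_eq_0)
  \<comment> \<open>Pairing the vanishing combination with P + a Q turns each u t into
    (a - t) times Q (u t), so the term for t = a drops out.\<close>
  then have "AE x in M. Q (\<Sum>t\<in>S. (c t * (a - t)) *s u t) x = 0"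
  proof (rule AE_mp, intro AE_I2 impI)
    fix x
    assume dep: "\<forall>t\<in>insert a S. P (u t) x = - (t * Q (u t) x)"
    have "0 = P (\<Sum>t\<in>insert a S. c t *s u t) x + a * Q (\<Sum>t\<in>insert a S. c t *s u t) x"
      using insert.prems(1) by (simp add: P_def Q_def)
    also have "\<dots> = (\<Sum>t\<in>insert a S. c t * (P (u t) x + a * Q (u t) x))"
      unfolding P_lincomb Q_lincomb
      by (simp add: distrib_left sum.distrib sum_distrib_left mult.left_commute)
    also have "\<dots> = (\<Sum>t\<in>insert a S. c t * ((a - t) * Q (u t) x))"
      using dep by (intro sum.cong) (auto simp: algebra_simps)
    also have "\<dots> = Q (\<Sum>t\<in>S. (c t * (a - t)) *s u t) x"
      using insert.hyps unfolding Q_lincomb by (simp add: mult.assoc)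
    finally show "Q (\<Sum>t\<in>S. (c t * (a - t)) *s u t) x = 0"
      by simp
  qed
  then have "(\<Sum>t\<in>S. (c t * (a - t)) *s u t) = 0"
    using G by (simp add: independent_coordinates_def Q_def)
  then have "\<forall>t\<in>S. c t * (a - t) = 0"
    using insert.prems(2) by (intro insert.IH) auto
  then have cS: "\<forall>t\<in>S. c t = 0"
    using insert.hyps(2) by fastforce
  then have "c a *s u a = 0"
    using insert.prems(1) insert.hyps by simp
  then show ?case
    using cS insert.prems(2)[of a] by simp
qed

lemma finite_dependent_perturbations:
  fixes f G :: "'a \<Rightarrow> 'F::field^'n::finite"
  assumes G: "independent_coordinates M G"
  shows "finite {t. \<not> independent_coordinates M (\<lambda>x. f x + t *s G x)}" (is "finite ?Bad")
proof -
  have "\<forall>t\<in>?Bad. \<exists>u. u \<noteq> 0 \<and> (AE x in M. (\<Sum>i\<in>UNIV. u $ i * (f x $ i + t * G x $ i)) = 0)"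
    by (auto simp: independent_coordinates_def)
  then obtain u where u: "\<forall>t\<in>?Bad.
      u t \<noteq> 0 \<and> (AE x in M. (\<Sum>i\<in>UNIV. u t $ i * (f x $ i + t * G x $ i)) = 0)"
    by (rule bchoice [THEN exE])
  have "card S \<le> CARD('n)" if S: "S \<subseteq> ?Bad" "finite S" for S
  proof (rule card_le_CARD_if_independent_family[OF S(2)])
    show "\<forall>t\<in>S. c t = 0" if "(\<Sum>t\<in>S. c t *s u t) = 0" for c
      using perturbation_dependences_independent[OF G S(2), where f = f and u = u] S(1) u that
      by blast
  qed
  then show ?thesis
    using finite_if_finite_subsets_card_bdd[of ?Bad "CARD('n)"] by blast
qed

lemma integral_power2_norm_lincomb_le:
  fixes f g :: "'a \<Rightarrow> 'F::{real_normed_field,euclidean_space}^'n::finite"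
  assumes f: "f \<in> L2 M" and g: "g \<in> L2 M"
  shows "(\<integral>x. (norm (a *s f x + b *s g x))\<^sup>2 \<partial>M)
    \<le> 2 * (norm a)\<^sup>2 * (\<integral>x. (norm (f x))\<^sup>2 \<partial>M)
      + 2 * (norm b)\<^sup>2 * (\<integral>x. (norm (g x))\<^sup>2 \<partial>M)"
proof -
  let ?bound = "\<lambda>x. 2 * (norm a)\<^sup>2 * (norm (f x))\<^sup>2 + 2 * (norm b)\<^sup>2 * (norm (g x))\<^sup>2"
  have bound: "(norm (a *s f x + b *s g x))\<^sup>2 \<le> ?bound x" for x
    using power2_norm_add_le[of "a *s f x" "b *s g x"]
    by (simp add: norm_vector_scalar_mult power_mult_distrib)
  have "integrable M ?bound"
    using L2_integrable[OF f] L2_integrable[OF g] by simp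
  moreover have "integrable M (\<lambda>x. (norm (a *s f x + b *s g x))\<^sup>2)"
    using L2_add[OF L2_scalar_mult[OF f] L2_scalar_mult[OF g]] by (rule L2_integrable)
  ultimately have "(\<integral>x. (norm (a *s f x + b *s g x))\<^sup>2 \<partial>M) \<le> (\<integral>x. ?bound x \<partial>M)"
    using bound by (intro integral_mono)
  also have "\<dots> = 2 * (norm a)\<^sup>2 * (\<integral>x. (norm (f x))\<^sup>2 \<partial>M)
      + 2 * (norm b)\<^sup>2 * (\<integral>x. (norm (g x))\<^sup>2 \<partial>M)"
    using L2_integrable[OF f] L2_integrable[OF g] by simp
  finally show ?thesis .
qed

lemma independent_coordinates_scalar_mult:
  fixes \<Phi> :: "'a \<Rightarrow> 'F::field^'n::finite"
  assumes "c \<noteq> 0" "independent_coordinates M \<Phi>"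
  shows "independent_coordinates M (\<lambda>x. c *s \<Phi> x)"
proof -
  have "(\<Sum>i\<in>UNIV. u $ i * (c *s \<Phi> x) $ i) = c * (\<Sum>i\<in>UNIV. u $ i * \<Phi> x $ i)" for u x
    by (simp add: sum_distrib_left mult.left_commute)
  then show ?thesis
    using assms by (simp add: independent_coordinates_def)
qed

lemma power2_L2norm_rescaled_perturbation_le:
  fixes f G :: "'a \<Rightarrow> 'F::{real_normed_field,euclidean_space}^'n::finite"
  assumes f: "f \<in> L2 M" and G: "G \<in> L2 M"
  shows "(L2norm M (\<lambda>x. f x - c *s (f x + t *s G x)))\<^sup>2
    \<le> 2 * (norm (1 - c))\<^sup>2 * (\<integral>x. (norm (f x))\<^sup>2 \<partial>M)
      + 2 * (norm (c * t))\<^sup>2 * (\<integral>x. (norm (G x))\<^sup>2 \<partial>M)"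
proof -
  have "(\<lambda>x. f x - c *s (f x + t *s G x)) = (\<lambda>x. (1 - c) *s f x + (- (c * t)) *s G x)"
    by (simp add: fun_eq_iff vec_eq_iff algebra_simps)
  moreover have "0 \<le> (\<integral>x. (norm ((1 - c) *s f x + (- (c * t)) *s G x))\<^sup>2 \<partial>M)"
    by (rule integral_nonneg_AE) simp
  ultimately show ?thesis
    using integral_power2_norm_lincomb_le[OF f G, of "1 - c" "- (c * t)"] by (simp add: L2norm_def)
qed

lemma finite_affine_zeros:
  fixes d c :: "'F::field"
  assumes "d \<noteq> 0"
  shows "finite {t. d + t * c = 0}"
proof (rule finite_subset)
  show "{t. d + t * c = 0} \<subseteq> {- d / c}"
  proof
    fix t
    assume "t \<in> {t. d + t * c = 0}"
    then have "t * c = - d"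
      by (simp add: add_eq_0_iff)
    moreover from this have "c \<noteq> 0"
      using assms by auto
    ultimately show "t \<in> {- d / c}"
      by (simp add: field_simps)
  qed
qed simp

definition frame_form ::
    "('F::real_normed_field \<Rightarrow> 'F) \<Rightarrow> 'a measure \<Rightarrow> ('a \<Rightarrow> 'F^'n::finite) \<Rightarrow> 'F^'n \<Rightarrow> real" where
  "frame_form cj M \<Phi> v = (\<integral>x. (norm (inner_cj cj v (\<Phi> x)))\<^sup>2 \<partial>M)"

lemma frame_form_nonneg: "0 \<le> frame_form cj M \<Phi> v"
  unfolding frame_form_def by (rule integral_nonneg_AE) simp

locale conjugation =
  fixes cj :: "'F::{real_normed_field,euclidean_space} \<Rightarrow> 'F"
  assumes cj_add: "cj (a + b) = cj a + cj b"
    and cj_mult: "cj (a * b) = cj a * cj b"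
    and cj_cj: "cj (cj a) = a"
    and norm_cj: "norm (cj a) = norm a"
    and mult_cj_self: "a * cj a = of_real ((norm a)\<^sup>2)"
    and continuous_on_cj_UNIV: "continuous_on UNIV cj"
begin

lemma cj_0 [simp]: "cj 0 = 0"
  using cj_add[of 0 0] by simp

lemma cj_eq_0_iff [simp]: "cj a = 0 \<longleftrightarrow> a = 0"
  by (metis cj_0 cj_cj)

lemma cj_sum: "cj (sum f S) = (\<Sum>x\<in>S. cj (f x))"
  by (induct S rule: infinite_finite_induct) (auto simp: cj_add)

lemma borel_measurable_cj [measurable (raw)]:
  "f \<in> borel_measurable M \<Longrightarrow> (\<lambda>x. cj (f x)) \<in> borel_measurable M"
  using measurable_compose[OF _ borel_measurable_continuous_onI[OF continuous_on_cj_UNIV]] by blast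

lemma continuous_on_cj [continuous_intros]:
  "continuous_on S g \<Longrightarrow> continuous_on S (\<lambda>x. cj (g x))"
  by (rule continuous_on_compose2[OF continuous_on_cj_UNIV]) auto

lemma norm_inner_cj_le: "norm (inner_cj cj v w) \<le> norm v * norm (w :: 'F^'n::finite)"
proof -
  have "norm (inner_cj cj v w) \<le> (\<Sum>i\<in>UNIV. norm (v $ i) * norm (w $ i))"
    unfolding inner_cj_def by (rule order_trans[OF norm_sum]) (simp add: norm_mult norm_cj)
  also have "\<dots> \<le> norm v * norm w"
    using L2_set_mult_ineq[of "\<lambda>i. norm (v $ i)" "\<lambda>i. norm (w $ i)" UNIV] by (simp add: norm_vec_def)
  finally show ?thesis .
qed

lemma power2_norm_inner_cj_le: "(norm (inner_cj cj v w))\<^sup>2 \<le> (norm v)\<^sup>2 * (norm (w :: 'F^'n::finite))\<^sup>2"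
  using norm_inner_cj_le by (simp add: power_mult_distrib[symmetric] power_mono)

lemma inner_cj_eq_0_iff: "inner_cj cj v w = 0 \<longleftrightarrow> (\<Sum>i\<in>UNIV. cj (v $ i) * w $ i) = 0"
proof -
  have "cj (inner_cj cj v w) = (\<Sum>i\<in>UNIV. cj (v $ i) * w $ i)"
    by (simp add: inner_cj_def cj_sum cj_mult cj_cj)
  then show ?thesis
    by (metis cj_eq_0_iff)
qed

lemma inner_cj_scaleR_left: "inner_cj cj (r *\<^sub>R v) w = of_real r * inner_cj cj v w"
  by (simp add: inner_cj_def sum_distrib_left scaleR_conv_of_real[where 'a = 'F] algebra_simps)

lemma of_real_power2_norm_inner_cj:
  "of_real ((norm (inner_cj cj v w))\<^sup>2) =
     (\<Sum>i\<in>UNIV. \<Sum>j\<in>UNIV. (v $ i * cj (v $ j)) * (cj (w $ i) * w $ j))"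
proof -
  have "of_real ((norm (inner_cj cj v w))\<^sup>2) = inner_cj cj v w * cj (inner_cj cj v w)"
    by (rule mult_cj_self[symmetric])
  also have "\<dots> = (\<Sum>i\<in>UNIV. v $ i * cj (w $ i)) * (\<Sum>j\<in>UNIV. cj (v $ j) * w $ j)"
    by (simp add: inner_cj_def cj_sum cj_mult cj_cj)
  also have "\<dots> = (\<Sum>i\<in>UNIV. \<Sum>j\<in>UNIV. (v $ i * cj (v $ j)) * (cj (w $ i) * w $ j))"
    by (simp add: sum_product mult_ac)
  finally show ?thesis .
qed

lemma integrable_frame_form_integrand:
  assumes "\<Phi> \<in> L2 M"
  shows "integrable M (\<lambda>x. (norm (inner_cj cj v (\<Phi> x :: 'F^'n::finite)))\<^sup>2)"
proof (rule Bochner_Integration.integrable_bound)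
  show "integrable M (\<lambda>x. (norm v)\<^sup>2 * (norm (\<Phi> x))\<^sup>2)"
    using L2_integrable[OF assms] by simp
  show "(\<lambda>x. (norm (inner_cj cj v (\<Phi> x)))\<^sup>2) \<in> borel_measurable M"
    using L2_measurable[OF assms] unfolding inner_cj_def by measurable
qed (simp add: power2_norm_inner_cj_le)

lemma integrable_cj_mult_coordinates:
  fixes \<Phi> :: "'a \<Rightarrow> 'F^'n::finite"
  assumes "\<Phi> \<in> L2 M"
  shows "integrable M (\<lambda>x. cj (\<Phi> x $ i) * \<Phi> x $ j)"
proof (rule Bochner_Integration.integrable_bound[OF L2_integrable[OF assms]])
  show "(\<lambda>x. cj (\<Phi> x $ i) * \<Phi> x $ j) \<in> borel_measurable M"
    using L2_measurable[OF assms] by measurable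
  have "norm (\<Phi> x $ i) * norm (\<Phi> x $ j) \<le> norm (\<Phi> x) * norm (\<Phi> x)" for x
    by (intro mult_mono Finite_Cartesian_Product.norm_nth_le) auto
  then show "AE x in M. norm (cj (\<Phi> x $ i) * \<Phi> x $ j) \<le> norm ((norm (\<Phi> x))\<^sup>2)"
    by (simp add: norm_mult norm_cj power2_eq_square)
qed

lemma frame_form_eq_sum:
  fixes \<Phi> :: "'a \<Rightarrow> 'F^'n::finite"
  assumes "\<Phi> \<in> L2 M"
  shows "frame_form cj M \<Phi> v =
     norm (\<Sum>i\<in>UNIV. \<Sum>j\<in>UNIV. (v $ i * cj (v $ j)) * (\<integral>x. cj (\<Phi> x $ i) * \<Phi> x $ j \<partial>M))"
proof -
  have "(of_real (frame_form cj M \<Phi> v) :: 'F) =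
      (\<integral>x. of_real ((norm (inner_cj cj v (\<Phi> x)))\<^sup>2) \<partial>M)"
    unfolding frame_form_def by (rule integral_of_real[symmetric, OF integrable_frame_form_integrand[OF assms]])
  also have "\<dots> = (\<integral>x. (\<Sum>i\<in>UNIV. \<Sum>j\<in>UNIV.
      (v $ i * cj (v $ j)) * (cj (\<Phi> x $ i) * \<Phi> x $ j)) \<partial>M)"
    by (simp only: of_real_power2_norm_inner_cj)
  also have "\<dots> = (\<Sum>i\<in>UNIV. \<Sum>j\<in>UNIV. (v $ i * cj (v $ j)) * (\<integral>x. cj (\<Phi> x $ i) * \<Phi> x $ j \<partial>M))"
    using integrable_cj_mult_coordinates[OF assms] by (simp add: integral_sum integrable_sum)
  finally have "(of_real (frame_form cj M \<Phi> v) :: 'F) =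
      (\<Sum>i\<in>UNIV. \<Sum>j\<in>UNIV. (v $ i * cj (v $ j)) * (\<integral>x. cj (\<Phi> x $ i) * \<Phi> x $ j \<partial>M))" .
  then show ?thesis
    using frame_form_nonneg[of cj M \<Phi> v] by (metis abs_of_nonneg norm_of_real)
qed

lemma continuous_on_frame_form:
  fixes \<Phi> :: "'a \<Rightarrow> 'F^'n::finite"
  assumes "\<Phi> \<in> L2 M"
  shows "continuous_on UNIV (frame_form cj M \<Phi>)"
  unfolding frame_form_eq_sum[OF assms, abs_def]
  by (intro continuous_intros linear_continuous_on bounded_linear_vec_nth)

lemma frame_form_le:
  fixes \<Phi> :: "'a \<Rightarrow> 'F^'n::finite"
  assumes "\<Phi> \<in> L2 M"
  shows "frame_form cj M \<Phi> v \<le> (\<integral>x. (norm (\<Phi> x))\<^sup>2 \<partial>M) * (norm v)\<^sup>2"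
proof -
  have "frame_form cj M \<Phi> v \<le> (\<integral>x. (norm v)\<^sup>2 * (norm (\<Phi> x))\<^sup>2 \<partial>M)"
    unfolding frame_form_def using L2_integrable[OF assms]
    by (intro integral_mono integrable_frame_form_integrand[OF assms] power2_norm_inner_cj_le) simp
  then show ?thesis
    by (simp add: mult.commute)
qed

lemma frame_form_scaleR: "frame_form cj M \<Phi> (r *\<^sub>R v) = r\<^sup>2 * frame_form cj M \<Phi> v"
  by (simp add: frame_form_def inner_cj_scaleR_left norm_mult power_mult_distrib)

lemma frame_form_pos:
  fixes \<Phi> :: "'a \<Rightarrow> 'F^'n::finite"
  assumes L2: "\<Phi> \<in> L2 M" and indep: "independent_coordinates M \<Phi>" and "v \<noteq> 0"
  shows "0 < frame_form cj M \<Phi> v"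
proof (rule ccontr)
  assume "\<not> 0 < frame_form cj M \<Phi> v"
  then have "frame_form cj M \<Phi> v = 0"
    using frame_form_nonneg[of cj M \<Phi> v] by linarith
  then have "AE x in M. inner_cj cj v (\<Phi> x) = 0"
    unfolding frame_form_def
    by (subst (asm) integral_nonneg_eq_0_iff_AE[OF integrable_frame_form_integrand[OF L2]]) auto
  then have "AE x in M. (\<Sum>i\<in>UNIV. (\<chi> i. cj (v $ i)) $ i * \<Phi> x $ i) = 0"
    by (simp add: inner_cj_eq_0_iff)
  then have "(\<chi> i. cj (v $ i)) = 0"
    using indep unfolding independent_coordinates_def by blast
  then show False
    using \<open>v \<noteq> 0\<close> by (simp add: vec_eq_iff)
qed

lemma frame_form_lower_bound:
  fixes \<Phi> :: "'a \<Rightarrow> 'F^'n::finite"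
  assumes L2: "\<Phi> \<in> L2 M" and indep: "independent_coordinates M \<Phi>"
  obtains A where "0 < A" "\<And>v. A * (norm v)\<^sup>2 \<le> frame_form cj M \<Phi> v"
proof -
  have "sphere (0 :: 'F^'n) 1 \<noteq> {}"
    using vector_choose_size[of 1] by auto
  then obtain v0 :: "'F^'n" where v0: "v0 \<in> sphere 0 1"
    and v0_min: "\<And>w. w \<in> sphere 0 1 \<Longrightarrow> frame_form cj M \<Phi> v0 \<le> frame_form cj M \<Phi> w"
    using continuous_attains_inf[OF compact_sphere _ continuous_on_subset[OF continuous_on_frame_form[OF L2]]]
    by blast
  show ?thesis
  proof (rule that)
    show "0 < frame_form cj M \<Phi> v0"
      using v0 by (intro frame_form_pos[OF L2 indep]) auto
    show "frame_form cj M \<Phi> v0 * (norm v)\<^sup>2 \<le> frame_form cj M \<Phi> v" for v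
    proof (cases "v = 0")
      case True
      then show ?thesis
        using frame_form_scaleR[of M \<Phi> 0 v] by simp
    next
      case False
      define w where "w = (1 / norm v) *\<^sub>R v"
      have "w \<in> sphere 0 1" and "v = norm v *\<^sub>R w"
        using False by (simp_all add: w_def)
      then show ?thesis
        using v0_min frame_form_scaleR[of M \<Phi> "norm v" w]
        by (metis mult.commute mult_left_mono zero_le_power2)
    qed
  qed
qed

lemma cframe_if_independent_coordinates:
  fixes \<Phi> :: "'a \<Rightarrow> 'F^'n::finite"
  assumes L2: "\<Phi> \<in> L2 M" and indep: "independent_coordinates M \<Phi>"
  shows "cframe cj M \<Phi>"
proof -
  obtain A where A: "0 < A" "\<And>v. A * (norm v)\<^sup>2 \<le> frame_form cj M \<Phi> v"
    using frame_form_lower_bound[OF L2 indep] by blast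
  define B where "B = max A (\<integral>x. (norm (\<Phi> x))\<^sup>2 \<partial>M)"
  have upper: "frame_form cj M \<Phi> v \<le> B * (norm v)\<^sup>2" for v
    using frame_form_le[OF L2, of v] mult_right_mono[OF max.cobounded2 zero_le_power2]
    unfolding B_def by (rule order_trans)
  have "(\<integral>\<^sup>+x. ennreal ((norm (inner_cj cj v (\<Phi> x)))\<^sup>2) \<partial>M) = ennreal (frame_form cj M \<Phi> v)" for v
    unfolding frame_form_def
    by (rule nn_integral_eq_integral[OF integrable_frame_form_integrand[OF L2]]) simp
  then show ?thesis
    unfolding cframe_def using L2_measurable[OF L2] A upper
    by (intro conjI exI[of _ A] exI[of _ B]) (auto simp: B_def intro: ennreal_leI)
qed

theorem frames_dense_in_level_set:
  fixes T :: "('a \<Rightarrow> 'F^'n::finite) \<Rightarrow> 'F" and f :: "'a \<Rightarrow> 'F^'n"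
  assumes T: "linear_form_L2 M T" and dim: "L2_dim_ge M TYPE('F) CARD('n)"
    and d: "d \<noteq> 0" and f: "f \<in> L2 M" and Tf: "T f = d" and e: "e > 0"
  shows "\<exists>g\<in>L2 M. cframe cj M g \<and> T g = d \<and> L2norm M (\<lambda>x. f x - g x) < e"
proof -
  obtain G :: "'a \<Rightarrow> 'F^'n" where G: "G \<in> L2 M" "independent_coordinates M G"
    using L2_dim_ge_obtains_independent_coordinates[OF dim] by blast
  define scale where "scale t = d / (d + t * T G)" for t
  define g where "g t x = scale t *s (f x + t *s G x)" for t x
  define R where "R t = 2 * (norm (1 - scale t))\<^sup>2 * (\<integral>x. (norm (f x))\<^sup>2 \<partial>M)
    + 2 * (norm (scale t * t))\<^sup>2 * (\<integral>x. (norm (G x))\<^sup>2 \<partial>M)" for t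
  define Bad where "Bad = {t. \<not> independent_coordinates M (\<lambda>x. f x + t *s G x)} \<union> {t. d + t * T G = 0}"
  have "finite Bad"
    unfolding Bad_def using finite_dependent_perturbations[OF G(2)] finite_affine_zeros[OF d] by blast
  then have ev_good: "eventually (\<lambda>t. t \<notin> Bad) (at 0)"
    using islimpt_finite islimpt_iff_eventually by blast
  have "(R \<longlongrightarrow> R 0) (at 0)"
    unfolding R_def scale_def using d by (intro tendsto_intros) auto
  moreover have "R 0 = 0"
    by (simp add: R_def scale_def d)
  ultimately have "eventually (\<lambda>t. R t < e\<^sup>2) (at 0)"
    using e by (metis order_tendstoD(2) zero_less_power)
  then obtain t where t: "t \<notin> Bad" "R t < e\<^sup>2"
    using eventually_happens'[OF at_neq_bot eventually_conj[OF ev_good]] by blast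
  have g: "g t \<in> L2 M"
    unfolding g_def by (intro L2_scalar_mult L2_add f G)
  have "scale t \<noteq> 0"
    using d t(1) by (simp add: scale_def Bad_def)
  then have "cframe cj M (g t)"
    using t(1) unfolding g_def Bad_def
    by (intro cframe_if_independent_coordinates g[unfolded g_def] independent_coordinates_scalar_mult) auto
  moreover have "T (g t) = d"
    using t(1) unfolding g_def linear_form_L2_lincomb[OF T f G(1)]
    by (simp add: Tf scale_def Bad_def)
  moreover have "(L2norm M (\<lambda>x. f x - g t x))\<^sup>2 < e\<^sup>2"
    using power2_L2norm_rescaled_perturbation_le[OF f G(1)] t(2) unfolding g_def R_def
    by (rule le_less_trans)
  then have "L2norm M (\<lambda>x. f x - g t x) < e"
    using e by (simp add: L2norm_def power2_less_imp_less)
  ultimately show ?thesis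
    using g by blast
qed

end

interpretation real_conjugation: conjugation "\<lambda>x :: real. x"
  by unfold_locales (auto simp: power2_eq_square)

interpretation complex_conjugation: conjugation cnj
  by unfold_locales (auto simp: complex_norm_square[symmetric] continuous_on_cnj continuous_on_id)

theorem corollary6p1:
  fixes M :: "'a measure"
  shows "(\<forall>(T :: ('a \<Rightarrow> real^'n::finite) \<Rightarrow> real) (d :: real).
            linear_form_L2 M T \<and> (\<exists>f\<in>L2 M. T f \<noteq> 0) \<and>
            L2_dim_ge M TYPE(real) CARD('n) \<and> d \<noteq> 0 \<longrightarrow>
            (\<forall>f\<in>L2 M. T f = d \<longrightarrow>
               (\<forall>e>0. \<exists>g\<in>L2 M. cframe (\<lambda>x. x) M g \<and> T g = d \<and>
                  L2norm M (\<lambda>x. f x - g x) < e)))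
       \<and> (\<forall>(T :: ('a \<Rightarrow> complex^'n) \<Rightarrow> complex) (d :: complex).
            linear_form_L2 M T \<and> (\<exists>f\<in>L2 M. T f \<noteq> 0) \<and>
            L2_dim_ge M TYPE(complex) CARD('n) \<and> d \<noteq> 0 \<longrightarrow>
            (\<forall>f\<in>L2 M. T f = d \<longrightarrow>
               (\<forall>e>0. \<exists>g\<in>L2 M. cframe cnj M g \<and> T g = d \<and>
                  L2norm M (\<lambda>x. f x - g x) < e)))"
  using real_conjugation.frames_dense_in_level_set complex_conjugation.frames_dense_in_level_set
  by blast

end
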